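(* Let $n\ge2$, let $L_1,\dots,L_n$ be finite lists of reals, each sorted in nondecreasing order, and fix $0\le\tau_{min}\le\tau_{max}$. Let $\|D\|=\sum_{i=1}^n |L_i|$ be the total size of the data. Then Algorithm-Chain runs in $O(\|D\|)$ time.
   Context: A tuple of indices $(p_1,\dots,p_n)$, with values $x_i=L_i[p_i]$, is valid if $x_{i+1}-x_i\in[\tau_{min},\tau_{max}]$ for $i=1,\dots,n-1$. The same algorithm and bound apply to ordered siblings, with $[-\delta,\delta]$ in place of $[\tau_{min},\tau_{max}]$. Algorithm-Chain, which computes a maximum matching (a largest sequence of valid tuples whose indices strictly increase in every list), is implemented as follows: 1. Keep pointers $P_1,\dots,P_n$, initially at the first entries, and a current pair index $i$, initially $1$. Let $x_k=L_k[P_k]$. 2. While every pointer lies within its list, do one of the following: - If $x_{i+1}-x_i<\tau_{min}$, advance $P_{i+1}$. - Else if $x_{i+1}-x_i\in[\tau_{min},\tau_{max}]$: if $i+1=n$, record $(P_1,\dots,P_n)$ as the next matched tuple, advance every pointer by one, and set $i\gets1$; otherwise set $i\gets i+1$. - Else ($x_{i+1}-x_i>\tau_{max}$), advance $P_i$ and set $i\gets\max(i-1,1)$. Arithmetic operations, comparisons and pointer moves cost unit time. *)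

theory Defs
  imports Complex_Main "HOL-Library.While_Combinator"
begin

text \<open>Lists and indices are 0-based:
  the lists are Ls!0, ..., Ls!(n-1); the current pair index i ranges over 0..n-2 and
  refers to the pair (i, i+1).  A state is (P, i, t): the pointer list P, the pair
  index i, and the running time t spent so far.\<close>

definition chain_val :: "real list list \<Rightarrow> nat list \<Rightarrow> nat \<Rightarrow> real" where
  "chain_val Ls P k = (Ls ! k) ! (P ! k)"

definition chain_cond :: "real list list \<Rightarrow> nat list \<times> nat \<times> nat \<Rightarrow> bool" where
  "chain_cond Ls s = (\<forall>k < length Ls. fst s ! k < length (Ls ! k))"

text \<open>One iteration of the loop body, together with its cost under the unit-cost model:
  one unit for evaluating the difference and comparing (and the loop test, which only
  needs to re-examine the pointers moved in the previous iteration), one unit per pointer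
  move, and on a match additionally n units for recording the tuple.\<close>
definition chain_step :: "real \<Rightarrow> real \<Rightarrow> real list list \<Rightarrow> nat list \<times> nat \<times> nat \<Rightarrow> nat list \<times> nat \<times> nat" where
  "chain_step tmin tmax Ls s =
     (case s of (P, i, t) \<Rightarrow>
       (let n = length Ls; d = chain_val Ls P (i+1) - chain_val Ls P i in
        if d < tmin then (P[i+1 := Suc (P ! (i+1))], i, t + 2)
        else if d \<le> tmax then
          (if i + 2 = n then (map Suc P, 0, t + 1 + 2 * n) else (P, i + 1, t + 1))
        else (P[i := Suc (P ! i)], i - 1, t + 2)))"

text \<open>Run of Algorithm-Chain: initial pointers at the first entries (cost n for the
  initialisation), pair index 0, time counter 0 (the O(n) pointer initialisation is not counted,
  since it is not bounded by ||D|| when all lists are empty).\<close>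
definition chain_run :: "real \<Rightarrow> real \<Rightarrow> real list list \<Rightarrow> (nat list \<times> nat \<times> nat) option" where
  "chain_run tmin tmax Ls =
     while_option (chain_cond Ls) (chain_step tmin tmax Ls) (replicate (length Ls) 0, 0, 0)"

definition data_size :: "real list list \<Rightarrow> nat" where
  "data_size Ls = (\<Sum>L\<leftarrow>Ls. length L)"

end

theory Submission
  imports Defs
begin

text \<open>Amortised analysis with potential 3 * (sum of pointers) + i.  Advancing one pointer costs
  2 and raises the potential by at least 2 (the pair index drops by at most one); moving to the
  next pair costs 1 and raises i by one; a match costs 2n + 1 while all n pointers advance and i
  drops from n - 2 to 0.  Pointers never pass the ends of their lists, so the potential, hence
  the time, stays below 3 ||D|| + n \<le> 4 ||D|| as soon as the loop body runs at all, which requires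
  every list to be nonempty.  Termination follows from the same data: every step advances a
  pointer or increases i, which gives a lexicographic measure.\<close>

lemma sum_list_list_update_Suc:
  "j < length P \<Longrightarrow> sum_list (P[j := Suc (P ! j)]) = Suc (sum_list (P :: nat list))"
  by (induction P arbitrary: j) (auto split: nat.splits)

lemma sum_list_map_Suc: "sum_list (map Suc P) = sum_list P + length (P :: nat list)"
  by (induction P) auto

lemma sum_list_le_data_size:
  assumes "length P = length Ls" "\<forall>k < length Ls. P ! k \<le> length (Ls ! k)"
  shows "sum_list (P :: nat list) \<le> data_size Ls"
  using assms unfolding data_size_def
proof (induction Ls arbitrary: P)
  case (Cons L Ls)
  then show ?case by (cases P) fastforce+
qed simp

lemma length_le_data_size: "\<forall>k < length Ls. Ls ! k \<noteq> [] \<Longrightarrow> length Ls \<le> data_size Ls"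
  unfolding data_size_def
proof (induction Ls)
  case (Cons L Ls)
  then have "L \<noteq> []" "\<forall>k < length Ls. Ls ! k \<noteq> []" by fastforce+
  with Cons.IH show ?case by (cases L) auto
qed simp

lemma chain_cond_initial_iff:
  "chain_cond Ls (replicate (length Ls) 0, i, t) \<longleftrightarrow> (\<forall>k < length Ls. Ls ! k \<noteq> [])"
  by (simp add: chain_cond_def)

lemma chain_step_cases:
  obtains (advance) j i' where "j \<le> i + 1" "i' \<le> i" "i \<le> i' + 1"
      "chain_step tmin tmax Ls (P, i, t) = (P[j := Suc (P ! j)], i', t + 2)"
  | (match) "i + 2 = length Ls" "chain_step tmin tmax Ls (P, i, t) = (map Suc P, 0, t + 1 + 2 * length Ls)"
  | (next_pair) "i + 2 \<noteq> length Ls" "chain_step tmin tmax Ls (P, i, t) = (P, i + 1, t + 1)"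
proof -
  define d where "d = chain_val Ls P (i + 1) - chain_val Ls P i"
  consider "d < tmin" | "\<not> d < tmin" "d \<le> tmax" | "\<not> d < tmin" "\<not> d \<le> tmax" by linarith
  then show thesis
  proof cases
    case 1
    then show thesis using advance[of "i + 1" i] by (simp add: chain_step_def Let_def d_def)
  next
    case 2
    then show thesis using match next_pair
      by (cases "i + 2 = length Ls") (simp_all add: chain_step_def Let_def d_def)
  next
    case 3
    then show thesis using advance[of i "i - 1"] by (simp add: chain_step_def Let_def d_def)
  qed
qed

definition chain_inv :: "real list list \<Rightarrow> nat list \<times> nat \<times> nat \<Rightarrow> bool" where
  "chain_inv Ls s = (case s of (P, i, t) \<Rightarrow>
     length P = length Ls \<and> (\<forall>k < length Ls. P ! k \<le> length (Ls ! k)) \<and> i + 2 \<le> length Ls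
     \<and> t \<le> 3 * sum_list P + i)"

lemma chain_inv_initial: "2 \<le> length Ls \<Longrightarrow> chain_inv Ls (replicate (length Ls) 0, 0, 0)"
  by (simp add: chain_inv_def)

lemma chain_step_preserves_inv:
  assumes "chain_inv Ls s" "chain_cond Ls s"
  shows "chain_inv Ls (chain_step tmin tmax Ls s)"
proof -
  obtain P i t where s: "s = (P, i, t)" by (cases s)
  have len: "length P = length Ls" and bounded: "\<forall>k < length Ls. P ! k \<le> length (Ls ! k)"
    and i_le: "i + 2 \<le> length Ls" and t_le: "t \<le> 3 * sum_list P + i"
    using assms(1) by (auto simp: chain_inv_def s)
  have inside: "\<forall>k < length Ls. P ! k < length (Ls ! k)"
    using assms(2) by (simp add: chain_cond_def s)
  show ?thesis
  proof (cases rule: chain_step_cases[of i tmin tmax Ls P t])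
    case (advance j i')
    have "P[j := Suc (P ! j)] ! k \<le> length (Ls ! k)" if "k < length Ls" for k
      using inside bounded len that by (cases "k = j") (auto simp: Suc_le_eq)
    moreover have "sum_list (P[j := Suc (P ! j)]) = Suc (sum_list P)"
      using sum_list_list_update_Suc advance(1) len i_le by simp
    ultimately show ?thesis using advance len i_le t_le by (simp add: chain_inv_def s)
  next
    case match
    have "map Suc P ! k \<le> length (Ls ! k)" if "k < length Ls" for k
      using inside len that by (simp add: Suc_le_eq)
    then show ?thesis using match len t_le by (simp add: chain_inv_def s sum_list_map_Suc)
  next
    case next_pair
    then show ?thesis using len bounded i_le t_le by (simp add: chain_inv_def s)
  qed
qed

definition chain_measure :: "real list list \<Rightarrow> ((nat list \<times> nat \<times> nat) \<times> (nat list \<times> nat \<times> nat)) set" where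
  "chain_measure Ls = measures [\<lambda>(P, i, t). data_size Ls - sum_list P, \<lambda>(P, i, t). length Ls - i]"

lemma chain_step_decreases:
  assumes "chain_inv Ls s" "chain_cond Ls s"
  shows "(chain_step tmin tmax Ls s, s) \<in> chain_measure Ls"
proof -
  obtain P i t where s: "s = (P, i, t)" by (cases s)
  obtain P' i' t' where s': "chain_step tmin tmax Ls s = (P', i', t')" by (cases "chain_step tmin tmax Ls s")
  have len: "length P = length Ls" and i_le: "i + 2 \<le> length Ls"
    using assms(1) by (auto simp: chain_inv_def s)
  have "chain_inv Ls (P', i', t')"
    using chain_step_preserves_inv[OF assms, where tmin = tmin and tmax = tmax] s' by simp
  then have sum_le: "sum_list P' \<le> data_size Ls"
    using sum_list_le_data_size by (auto simp: chain_inv_def)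
  show ?thesis
  proof (cases rule: chain_step_cases[of i tmin tmax Ls P t])
    case (advance j i')
    then show ?thesis
      using s s' sum_le len i_le sum_list_list_update_Suc[of j P] by (auto simp: chain_measure_def)
  next
    case match
    then show ?thesis using s s' sum_le len i_le by (auto simp: chain_measure_def sum_list_map_Suc)
  next
    case next_pair
    then show ?thesis using s s' i_le by (auto simp: chain_measure_def)
  qed
qed

lemma chain_run_terminates_with_inv:
  assumes "2 \<le> length Ls"
  obtains s where "chain_run tmin tmax Ls = Some s" "chain_inv Ls s"
proof -
  let ?s0 = "(replicate (length Ls) 0, 0::nat, 0::nat)"
  have "wf (chain_measure Ls)" by (simp add: chain_measure_def)
  then have wf: "wf {(s', s). (chain_inv Ls s \<and> chain_cond Ls s) \<and> s' = chain_step tmin tmax Ls s}"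
    by (rule wf_subset) (use chain_step_decreases in blast)
  obtain s where run: "chain_run tmin tmax Ls = Some s"
    using wf_while_option_Some[OF wf _ chain_inv_initial[OF assms]] chain_step_preserves_inv
    unfolding chain_run_def by blast
  moreover have "chain_inv Ls s"
    using while_option_rule[where P = "chain_inv Ls", OF _ run[unfolded chain_run_def] chain_inv_initial[OF assms]]
      chain_step_preserves_inv by blast
  ultimately show thesis by (rule that)
qed

lemma chain_inv_time_le:
  assumes "chain_inv Ls (P, i, t)" "\<forall>k < length Ls. Ls ! k \<noteq> []"
  shows "t \<le> 4 * data_size Ls"
proof -
  have "sum_list P \<le> data_size Ls"
    using assms(1) sum_list_le_data_size by (auto simp: chain_inv_def)
  moreover have "length Ls \<le> data_size Ls" using length_le_data_size assms(2) .
  ultimately show ?thesis using assms(1) by (auto simp: chain_inv_def)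
qed

lemma chain_run_time_le:
  assumes "2 \<le> length Ls"
  shows "\<exists>P i t. chain_run tmin tmax Ls = Some (P, i, t) \<and> t \<le> 4 * data_size Ls"
proof (cases "\<forall>k < length Ls. Ls ! k \<noteq> []")
  case True
  obtain s where "chain_run tmin tmax Ls = Some s" "chain_inv Ls s"
    using chain_run_terminates_with_inv[OF assms] .
  with True show ?thesis by (cases s) (blast dest: chain_inv_time_le)
next
  case False
  then have "chain_run tmin tmax Ls = Some (replicate (length Ls) 0, 0, 0)"
    unfolding chain_run_def by (subst while_option_unfold) (auto simp: chain_cond_initial_iff)
  then show ?thesis by blast
qed

theorem mainTheorem3:
  shows "\<exists>C::nat. \<forall>(Ls::real list list) (tmin::real) (tmax::real).
           length Ls \<ge> 2 \<and> (\<forall>L\<in>set Ls. sorted L) \<and> 0 \<le> tmin \<and> tmin \<le> tmax \<longrightarrow>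
           (\<exists>P i t. chain_run tmin tmax Ls = Some (P, i, t) \<and> t \<le> C * data_size Ls)"
  \<comment> \<open>Sortedness and the conditions on tmin, tmax matter for correctness, not for the running time.\<close>
  using chain_run_time_le by blast

end
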